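(* Let $\mathbf{X}^*=(X^*_{1:1},\dots,X^*_{n:n})'$, $\boldsymbol{\mu}$, $\mathbf{E}$ be as in the context and $\mathbf{1}=(1,\dots,1)'\in\mathbb{R}^n$. Then the partial maxima BLIEs of $\theta_1$ and $\theta_2$ are, respectively, \[ T_1=\frac{\mathbf{1}'\mathbf{E}^{-1}\mathbf{X}^*}{\mathbf{1}'\mathbf{E}^{-1}\mathbf{1}},\qquad T_2=\frac{\mathbf{1}'\mathbf{G}\mathbf{X}^*}{\mathbf{1}'\mathbf{E}^{-1}\mathbf{1}}, \] where $\mathbf{G}=\mathbf{E}^{-1}(\mathbf{1}\boldsymbol{\mu}'-\boldsymbol{\mu}\mathbf{1}')\mathbf{E}^{-1}$, and their mean squared errors are \[ \mathrm{MSE}[T_1]=\frac{\theta_2^2}{\mathbf{1}'\mathbf{E}^{-1}\mathbf{1}},\qquad \mathrm{MSE}[T_2]=\Big(1-\frac{D}{\mathbf{1}'\mathbf{E}^{-1}\mathbf{1}}\Big)\theta_2^2, \] where $D=(\mathbf{1}'\mathbf{E}^{-1}\mathbf{1})(\boldsymbol{\mu}'\mathbf{E}^{-1}\boldsymbol{\mu})-(\mathbf{1}'\mathbf{E}^{-1}\boldsymbol{\mu})^2>0$.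
   Context: $F$ is a known, parameter-free, non-degenerate distribution function on $\mathbb{R}$ with finite variance. For unknown $\theta_1\in\mathbb{R}$, $\theta_2>0$, $X_1^*,\dots,X_n^*$ are i.i.d. with distribution function $F((x-\theta_1)/\theta_2)$ and $X^*_{j:j}=\max\{X_1^*,\dots,X_j^*\}$. Let $X_1,\dots,X_n$ be i.i.d. from $F$, $X_{j:j}=\max\{X_1,\dots,X_j\}$, $\mathbf{X}=(X_{1:1},\dots,X_{n:n})'$, $\boldsymbol{\mu}=\mathbb{E}[\mathbf{X}]$, $\mathbf{E}=\mathbb{E}[\mathbf{X}\mathbf{X}']$ (positive definite). A linear statistic $L(\mathbf{X}^* )=\mathbf{c}'\mathbf{X}^*$ ($\mathbf{c}\in\mathbb{R}^n$ constant) is invariant for $\theta_1$ if $L(b\mathbf{X}^*+a\mathbf{1})=a+bL(\mathbf{X}^* )$ for all $a\in\mathbb{R}$, $b>0$ (equivalently $\mathbf{c}'\mathbf{1}=1$), and invariant for $\theta_2$ if $L(b\mathbf{X}^*+a\mathbf{1})=bL(\mathbf{X}^* )$ for all $a\in\mathbb{R}$, $b>0$ (equivalently $\mathbf{c}'\mathbf{1}=0$). The BLIE of $\theta_k$ is the linear statistic invariant for $\theta_k$ minimizing the mean squared error $\mathbb{E}[L-\theta_k]^2$. *)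

theory Defs
  imports "HOL-Probability.Probability" "Jordan_Normal_Form.Gauss_Jordan_Elimination"
begin

text \<open>Partial maximum, 0-indexed: pmax Y j w = max of Y 0 w, ..., Y j w,
  i.e. the paper's X_{(j+1):(j+1)}.\<close>
definition pmax :: "(nat \<Rightarrow> 'a \<Rightarrow> real) \<Rightarrow> nat \<Rightarrow> 'a \<Rightarrow> real" where
  "pmax Y j w = Max ((\<lambda>i. Y i w) ` {..j})"

definition pmax_vec :: "nat \<Rightarrow> (nat \<Rightarrow> 'a \<Rightarrow> real) \<Rightarrow> 'a \<Rightarrow> real vec" where
  "pmax_vec n Y w = vec n (\<lambda>j. pmax Y j w)"

definition mu_vec :: "'a measure \<Rightarrow> nat \<Rightarrow> (nat \<Rightarrow> 'a \<Rightarrow> real) \<Rightarrow> real vec" where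
  "mu_vec M n Y = vec n (\<lambda>j. integral\<^sup>L M (pmax Y j))"

definition E_mat :: "'a measure \<Rightarrow> nat \<Rightarrow> (nat \<Rightarrow> 'a \<Rightarrow> real) \<Rightarrow> real mat" where
  "E_mat M n Y = mat n n (\<lambda>(i,j). integral\<^sup>L M (\<lambda>w. pmax Y i w * pmax Y j w))"

definition ones_vec :: "nat \<Rightarrow> real vec" where
  "ones_vec n = vec n (\<lambda>_. 1)"

definition pos_def_mat :: "nat \<Rightarrow> real mat \<Rightarrow> bool" where
  "pos_def_mat n A \<longleftrightarrow> (\<forall>v\<in>carrier_vec n. v \<noteq> 0\<^sub>v n \<longrightarrow> v \<bullet> (A *\<^sub>v v) > 0)"

text \<open>Matrix inverse (meaningful for invertible square matrices).\<close>
definition inv_mat :: "real mat \<Rightarrow> real mat" where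
  "inv_mat A = the (mat_inverse A)"

definition invariant_loc :: "nat \<Rightarrow> real vec \<Rightarrow> bool" where
  "invariant_loc n c \<longleftrightarrow> (\<forall>x\<in>carrier_vec n. \<forall>a b::real. b > 0 \<longrightarrow>
      c \<bullet> (b \<cdot>\<^sub>v x + a \<cdot>\<^sub>v ones_vec n) = a + b * (c \<bullet> x))"

definition invariant_scale :: "nat \<Rightarrow> real vec \<Rightarrow> bool" where
  "invariant_scale n c \<longleftrightarrow> (\<forall>x\<in>carrier_vec n. \<forall>a b::real. b > 0 \<longrightarrow>
      c \<bullet> (b \<cdot>\<^sub>v x + a \<cdot>\<^sub>v ones_vec n) = b * (c \<bullet> x))"

definition MSE :: "'a measure \<Rightarrow> ('a \<Rightarrow> real vec) \<Rightarrow> real vec \<Rightarrow> real \<Rightarrow> real" where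
  "MSE M Xs c theta = integral\<^sup>L M (\<lambda>w. (c \<bullet> Xs w - theta)\<^sup>2)"

definition is_BLIE :: "'a measure \<Rightarrow> nat \<Rightarrow> ('a \<Rightarrow> real vec) \<Rightarrow> (real vec \<Rightarrow> bool) \<Rightarrow> real \<Rightarrow> real vec \<Rightarrow> bool" where
  "is_BLIE M n Xs Inv theta c \<longleftrightarrow> c \<in> carrier_vec n \<and> Inv c \<and>
     (\<forall>d\<in>carrier_vec n. Inv d \<longrightarrow> MSE M Xs c theta \<le> MSE M Xs d theta) \<and>
     (\<forall>d\<in>carrier_vec n. Inv d \<longrightarrow> MSE M Xs d theta \<le> MSE M Xs c theta \<longrightarrow> d = c)"

end

(* Invariance pins down c'1 (1 for theta1, 0 for theta2), and on that hyperplane the MSE of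
   c'X* is theta2^2 (c'Ec - 2 c'b) up to a constant, with b = 0 for theta1 and b = mu for theta2.
   Completing the square, the unique minimiser is the c on the hyperplane with Ec in b + R1,
   i.e. the Lagrange solution, which gives T1 and T2 and their MSEs.  D/Q is the E-quadratic
   form of the coefficient vector of T2, so D > 0 unless mu is a multiple of 1; that is
   excluded because E[max(X1, X2)] > E[X1] for independent non-degenerate X1, X2. *)

theory Submission
  imports Defs "Jordan_Normal_Form.Determinant"
begin

no_notation inner (infix \<open>\<bullet>\<close> 70)
no_notation vec_nth (infixl \<open>$\<close> 90)

lemma ones_vec_carrier [simp]: "ones_vec n \<in> carrier_vec n"
  unfolding ones_vec_def by simp

lemma dim_ones_vec [simp]: "dim_vec (ones_vec n) = n"
  unfolding ones_vec_def by simp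

lemma index_ones_vec [simp]: "i < n \<Longrightarrow> ones_vec n $ i = 1"
  unfolding ones_vec_def by simp

lemma ones_vec_nonzero: "n > 0 \<Longrightarrow> ones_vec n \<noteq> 0\<^sub>v n"
  by (metis index_ones_vec index_zero_vec(1) zero_neq_one)

lemma scalar_prod_affine:
  assumes "c \<in> carrier_vec n" "x \<in> carrier_vec n"
  shows "c \<bullet> (b \<cdot>\<^sub>v x + a \<cdot>\<^sub>v ones_vec n) = a * (c \<bullet> ones_vec n) + b * (c \<bullet> x)"
  using assms by (simp add: scalar_prod_add_distrib[of _ n])

lemma invariant_loc_iff:
  assumes "c \<in> carrier_vec n"
  shows "invariant_loc n c \<longleftrightarrow> c \<bullet> ones_vec n = 1"
proof
  assume "invariant_loc n c"
  from this[unfolded invariant_loc_def, rule_format, OF zero_carrier_vec, of 1 1]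
  show "c \<bullet> ones_vec n = 1" using assms scalar_prod_affine[OF assms zero_carrier_vec] by simp
qed (use assms in \<open>auto simp: invariant_loc_def scalar_prod_affine\<close>)

lemma invariant_scale_iff:
  assumes "c \<in> carrier_vec n"
  shows "invariant_scale n c \<longleftrightarrow> c \<bullet> ones_vec n = 0"
proof
  assume "invariant_scale n c"
  from this[unfolded invariant_scale_def, rule_format, OF zero_carrier_vec, of 1 1]
  show "c \<bullet> ones_vec n = 0" using assms scalar_prod_affine[OF assms zero_carrier_vec] by simp
qed (use assms in \<open>auto simp: invariant_scale_def scalar_prod_affine\<close>)

lemma symmetric_form_comm:
  fixes E :: "real mat"
  assumes "E \<in> carrier_mat n n" "transpose_mat E = E" "x \<in> carrier_vec n" "y \<in> carrier_vec n"
  shows "x \<bullet> (E *\<^sub>v y) = y \<bullet> (E *\<^sub>v x)"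
  using transpose_vec_mult_scalar[of E n n y x] assms by (simp add: comm_scalar_prod[of _ n])

lemma pos_def_mat_nonneg:
  fixes E :: "real mat"
  assumes "pos_def_mat n E" "E \<in> carrier_mat n n" "e \<in> carrier_vec n"
  shows "e \<bullet> (E *\<^sub>v e) \<ge> 0"
  using assms by (cases "e = 0\<^sub>v n") (auto simp: pos_def_mat_def less_imp_le)

lemma pos_def_mat_eq_0:
  assumes "pos_def_mat n E" "e \<in> carrier_vec n" "e \<bullet> (E *\<^sub>v e) \<le> 0"
  shows "e = 0\<^sub>v n"
  using assms unfolding pos_def_mat_def by force

lemma pos_def_mat_inv_mat:
  fixes E :: "real mat"
  assumes E: "E \<in> carrier_mat n n" and pd: "pos_def_mat n E"
  shows "inv_mat E \<in> carrier_mat n n" "E * inv_mat E = 1\<^sub>m n"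
proof -
  have "Determinant.det E \<noteq> 0"
  proof
    assume "Determinant.det E = 0"
    then obtain v where "v \<in> carrier_vec n" "v \<noteq> 0\<^sub>v n" "E *\<^sub>v v = 0\<^sub>v n"
      using det_0_iff_vec_prod_zero_field[OF E] by blast
    then show False using pd E unfolding pos_def_mat_def by fastforce
  qed
  then have "E \<in> Units (ring_mat TYPE(real) n ())" by (rule det_non_zero_imp_unit[OF E])
  then obtain B where "mat_inverse E = Some B" using mat_inverse(1)[OF E] by fastforce
  then show "inv_mat E \<in> carrier_mat n n" "E * inv_mat E = 1\<^sub>m n"
    using mat_inverse(2)[OF E] by (auto simp: inv_mat_def)
qed

lemma quadratic_form_excess:
  fixes E :: "real mat"
  assumes E: "E \<in> carrier_mat n n" "transpose_mat E = E"
    and vecs: "b \<in> carrier_vec n" "c \<in> carrier_vec n" "d \<in> carrier_vec n"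
    and Ec: "E *\<^sub>v c = b + k \<cdot>\<^sub>v ones_vec n"
    and level: "d \<bullet> ones_vec n = c \<bullet> ones_vec n"
  shows "d \<bullet> (E *\<^sub>v d) - 2 * (d \<bullet> b)
       = c \<bullet> (E *\<^sub>v c) - 2 * (c \<bullet> b) + (d - c) \<bullet> (E *\<^sub>v (d - c))"
proof -
  have "(d - c) \<bullet> (E *\<^sub>v (d - c)) = d \<bullet> (E *\<^sub>v d) - 2 * (d \<bullet> (E *\<^sub>v c)) + c \<bullet> (E *\<^sub>v c)"
    using E vecs symmetric_form_comm[OF E, of c d]
    by (simp add: mult_minus_distrib_mat_vec minus_scalar_prod_distrib[of _ n]
        scalar_prod_minus_distrib[of _ n])
  moreover have "d \<bullet> (E *\<^sub>v c) - c \<bullet> (E *\<^sub>v c) = d \<bullet> b - c \<bullet> b"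
    using vecs level unfolding Ec by (simp add: scalar_prod_add_distrib[of _ n])
  ultimately show ?thesis by simp
qed

lemma is_BLIE_quadratic:
  fixes E :: "real mat" and Xs :: "'a \<Rightarrow> real vec"
  assumes pd: "pos_def_mat n E" and E: "E \<in> carrier_mat n n" "transpose_mat E = E"
    and vecs: "b \<in> carrier_vec n" "c \<in> carrier_vec n"
    and Ec: "E *\<^sub>v c = b + k \<cdot>\<^sub>v ones_vec n"
    and Inv: "\<And>d. d \<in> carrier_vec n \<Longrightarrow> Inv d \<longleftrightarrow> d \<bullet> ones_vec n = c \<bullet> ones_vec n"
    and mse: "\<And>d. d \<in> carrier_vec n \<Longrightarrow> Inv d \<Longrightarrow>
               MSE M Xs d \<theta> = \<alpha> + \<beta> * (d \<bullet> (E *\<^sub>v d) - 2 * (d \<bullet> b))"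
    and "\<beta> > 0"
  shows "is_BLIE M n Xs Inv \<theta> c"
proof -
  have "Inv c" using Inv vecs by simp
  have excess: "MSE M Xs d \<theta> = MSE M Xs c \<theta> + \<beta> * ((d - c) \<bullet> (E *\<^sub>v (d - c)))"
    if "d \<in> carrier_vec n" "Inv d" for d
  proof -
    have level: "d \<bullet> ones_vec n = c \<bullet> ones_vec n" using Inv that by simp
    have "MSE M Xs d \<theta>
        = \<alpha> + \<beta> * (c \<bullet> (E *\<^sub>v c) - 2 * (c \<bullet> b) + (d - c) \<bullet> (E *\<^sub>v (d - c)))"
      unfolding mse[OF that] quadratic_form_excess[OF E vecs that(1) Ec level] ..
    then show ?thesis unfolding mse[OF vecs(2) \<open>Inv c\<close>] by (simp add: algebra_simps)
  qed
  have "d = c" if "d \<in> carrier_vec n" "Inv d" "MSE M Xs d \<theta> \<le> MSE M Xs c \<theta>" for d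
  proof -
    have "(d - c) \<bullet> (E *\<^sub>v (d - c)) \<le> 0"
      using excess[OF that(1,2)] that(3) \<open>\<beta> > 0\<close> by (simp add: mult_le_0_iff)
    then have "d - c = 0\<^sub>v n" using pd that(1) vecs by (auto intro: pos_def_mat_eq_0)
    then show "d = c" using that(1) vecs by (auto simp: vec_eq_iff)
  qed
  moreover have "MSE M Xs c \<theta> \<le> MSE M Xs d \<theta>" if "d \<in> carrier_vec n" "Inv d" for d
    using excess[OF that] pos_def_mat_nonneg[OF pd E(1), of "d - c"] that(1) vecs \<open>\<beta> > 0\<close> by simp
  ultimately show ?thesis using vecs \<open>Inv c\<close> unfolding is_BLIE_def by blast
qed

locale gls_weights =
  fixes n :: nat and E Ei :: "real mat" and mu :: "real vec"
  assumes E_carrier: "E \<in> carrier_mat n n"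
    and E_symmetric: "transpose_mat E = E"
    and E_pos_def: "pos_def_mat n E"
    and Ei_carrier: "Ei \<in> carrier_mat n n"
    and E_Ei: "E * Ei = 1\<^sub>m n"
    and mu_carrier: "mu \<in> carrier_vec n"
    and n_pos: "n > 0"
begin

definition Q :: real where "Q = ones_vec n \<bullet> (Ei *\<^sub>v ones_vec n)"
definition P :: real where "P = ones_vec n \<bullet> (Ei *\<^sub>v mu)"
definition D :: real where "D = Q * (mu \<bullet> (Ei *\<^sub>v mu)) - P\<^sup>2"

definition G :: "real mat" where
  "G = Ei * mat n n (\<lambda>(i,j). ones_vec n $ i * mu $ j - mu $ i * ones_vec n $ j) * Ei"

definition c_loc :: "real vec" where "c_loc = (1 / Q) \<cdot>\<^sub>v (transpose_mat Ei *\<^sub>v ones_vec n)"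
definition c_scale :: "real vec" where "c_scale = (1 / Q) \<cdot>\<^sub>v (transpose_mat G *\<^sub>v ones_vec n)"

lemma Ei_symmetric: "transpose_mat Ei = Ei"
proof -
  have left_inverse: "transpose_mat Ei * E = 1\<^sub>m n"
    using transpose_mult[OF E_carrier Ei_carrier] E_Ei E_symmetric by simp
  have "transpose_mat Ei = transpose_mat Ei * (E * Ei)"
    using Ei_carrier by (simp add: E_Ei)
  also have "\<dots> = (transpose_mat Ei * E) * Ei"
    using Ei_carrier E_carrier by (simp add: assoc_mult_mat[of _ n n _ n _ n])
  also have "\<dots> = Ei"
    using Ei_carrier by (simp add: left_inverse)
  finally show ?thesis .
qed

lemma E_Ei_vec: "v \<in> carrier_vec n \<Longrightarrow> E *\<^sub>v (Ei *\<^sub>v v) = v"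
  using E_carrier Ei_carrier E_Ei by (simp flip: assoc_mult_mat_vec)

lemma Ei_form_comm: "x \<in> carrier_vec n \<Longrightarrow> y \<in> carrier_vec n \<Longrightarrow> x \<bullet> (Ei *\<^sub>v y) = y \<bullet> (Ei *\<^sub>v x)"
  by (rule symmetric_form_comm[OF Ei_carrier Ei_symmetric])

lemma Q_pos: "Q > 0"
proof -
  define a where "a = Ei *\<^sub>v ones_vec n"
  have a: "a \<in> carrier_vec n" and Ea: "E *\<^sub>v a = ones_vec n"
    unfolding a_def using Ei_carrier E_Ei_vec by auto
  have "E *\<^sub>v 0\<^sub>v n = 0\<^sub>v n" using E_carrier by auto
  then have "a \<noteq> 0\<^sub>v n" using Ea ones_vec_nonzero[OF n_pos] by auto
  then have "a \<bullet> (E *\<^sub>v a) > 0" using E_pos_def a unfolding pos_def_mat_def by blast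
  then show ?thesis
    unfolding Ea Q_def using a comm_scalar_prod[OF a ones_vec_carrier] by (simp add: a_def)
qed

lemma c_loc_eq: "c_loc = (1 / Q) \<cdot>\<^sub>v (Ei *\<^sub>v ones_vec n)"
  by (simp add: c_loc_def Ei_symmetric)

lemma c_loc_carrier: "c_loc \<in> carrier_vec n"
  using Ei_carrier by (simp add: c_loc_eq)

lemma E_c_loc: "E *\<^sub>v c_loc = (1 / Q) \<cdot>\<^sub>v ones_vec n"
  using E_carrier Ei_carrier by (simp add: c_loc_eq mult_mat_vec E_Ei_vec)

lemma c_loc_ones: "c_loc \<bullet> ones_vec n = 1"
  using Ei_carrier Q_pos comm_scalar_prod[of "Ei *\<^sub>v ones_vec n" n "ones_vec n"]
  by (simp add: c_loc_eq Q_def)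

lemma quad_c_loc: "c_loc \<bullet> (E *\<^sub>v c_loc) = 1 / Q"
  using c_loc_carrier c_loc_ones by (simp add: E_c_loc)

lemma transpose_G_ones:
  "transpose_mat G *\<^sub>v ones_vec n = Q \<cdot>\<^sub>v (Ei *\<^sub>v mu) - P \<cdot>\<^sub>v (Ei *\<^sub>v ones_vec n)"
proof -
  define K where "K = mat n n (\<lambda>(i,j). ones_vec n $ i * mu $ j - mu $ i * ones_vec n $ j)"
  define a where "a = Ei *\<^sub>v ones_vec n"
  have K: "K \<in> carrier_mat n n" and a: "a \<in> carrier_vec n"
    unfolding K_def a_def using Ei_carrier by auto
  have "transpose_mat K *\<^sub>v a = (ones_vec n \<bullet> a) \<cdot>\<^sub>v mu - (mu \<bullet> a) \<cdot>\<^sub>v ones_vec n"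
    using a mu_carrier
    by (intro eq_vecI) (auto simp: K_def scalar_prod_def sum_subtractf sum_distrib_left
        sum_distrib_right algebra_simps)
  also have "\<dots> = Q \<cdot>\<^sub>v mu - P \<cdot>\<^sub>v ones_vec n"
    using Ei_form_comm[OF mu_carrier ones_vec_carrier] by (simp add: a_def Q_def P_def)
  finally have Ka: "transpose_mat K *\<^sub>v a = Q \<cdot>\<^sub>v mu - P \<cdot>\<^sub>v ones_vec n" .
  have "transpose_mat G = Ei * (transpose_mat K * Ei)"
    unfolding G_def K_def[symmetric] using Ei_carrier K
    by (simp add: transpose_mult[of _ n n _ n] Ei_symmetric)
  then have "transpose_mat G *\<^sub>v ones_vec n = Ei *\<^sub>v (transpose_mat K *\<^sub>v a)"
    using Ei_carrier K by (simp add: a_def assoc_mult_mat_vec[of _ n n _ n])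
  also have "\<dots> = Q \<cdot>\<^sub>v (Ei *\<^sub>v mu) - P \<cdot>\<^sub>v a"
    unfolding Ka using Ei_carrier mu_carrier
    by (simp add: a_def mult_minus_distrib_mat_vec mult_mat_vec)
  finally show ?thesis unfolding a_def .
qed

lemma c_scale_eq: "c_scale = Ei *\<^sub>v mu - (P / Q) \<cdot>\<^sub>v (Ei *\<^sub>v ones_vec n)"
  using Q_pos Ei_carrier mu_carrier
  by (intro eq_vecI) (auto simp: c_scale_def transpose_G_ones field_simps)

lemma c_scale_carrier: "c_scale \<in> carrier_vec n"
  using Ei_carrier mu_carrier by (simp add: c_scale_eq)

lemma E_c_scale: "E *\<^sub>v c_scale = mu + (- P / Q) \<cdot>\<^sub>v ones_vec n"
  using E_carrier Ei_carrier mu_carrier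
  by (intro eq_vecI)
     (auto simp: c_scale_eq mult_minus_distrib_mat_vec mult_mat_vec E_Ei_vec)

lemma c_scale_ones: "c_scale \<bullet> ones_vec n = 0"
proof -
  have "(Ei *\<^sub>v mu) \<bullet> ones_vec n = P" "(Ei *\<^sub>v ones_vec n) \<bullet> ones_vec n = Q"
    using Ei_carrier mu_carrier by (simp_all add: P_def Q_def comm_scalar_prod[of _ n])
  then show ?thesis
    using Ei_carrier mu_carrier Q_pos by (simp add: c_scale_eq minus_scalar_prod_distrib[of _ n])
qed

lemma c_scale_mu: "c_scale \<bullet> mu = D / Q"
proof -
  have "(Ei *\<^sub>v mu) \<bullet> mu = mu \<bullet> (Ei *\<^sub>v mu)" "(Ei *\<^sub>v ones_vec n) \<bullet> mu = P"
    using Ei_carrier mu_carrier Ei_form_comm[OF mu_carrier ones_vec_carrier]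
    by (simp_all add: P_def comm_scalar_prod[of _ n])
  then show ?thesis
    using Ei_carrier mu_carrier Q_pos
    by (simp add: c_scale_eq D_def minus_scalar_prod_distrib[of _ n] field_simps power2_eq_square)
qed

lemma quad_c_scale: "c_scale \<bullet> (E *\<^sub>v c_scale) = D / Q"
  using c_scale_carrier mu_carrier c_scale_ones c_scale_mu
  by (simp add: E_c_scale scalar_prod_add_distrib[of _ n])

lemma D_pos:
  assumes "\<And>k. mu \<noteq> k \<cdot>\<^sub>v ones_vec n"
  shows "D > 0"
proof -
  have "c_scale \<noteq> 0\<^sub>v n"
  proof
    assume "c_scale = 0\<^sub>v n"
    moreover have "E *\<^sub>v 0\<^sub>v n = 0\<^sub>v n" using E_carrier by auto
    ultimately have "mu + (- P / Q) \<cdot>\<^sub>v ones_vec n = 0\<^sub>v n"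
      using E_c_scale by simp
    then have "mu = (P / Q) \<cdot>\<^sub>v ones_vec n" using mu_carrier by (auto simp: vec_eq_iff)
    then show False using assms by blast
  qed
  then have "c_scale \<bullet> (E *\<^sub>v c_scale) > 0"
    using E_pos_def c_scale_carrier unfolding pos_def_mat_def by blast
  then show ?thesis using quad_c_scale Q_pos by (simp add: zero_less_divide_iff)
qed

end

lemma pmax_eq_member: "\<exists>k\<le>j. pmax Y j w = Y k w"
proof -
  have "Max ((\<lambda>i. Y i w) ` {..j}) \<in> (\<lambda>i. Y i w) ` {..j}" by (rule Max_in) auto
  then obtain k where "k \<in> {..j}" "Max ((\<lambda>i. Y i w) ` {..j}) = Y k w" by blast
  then show ?thesis unfolding pmax_def atMost_iff by blast
qed

lemma borel_measurable_pmax: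
  assumes "\<And>i. i \<le> j \<Longrightarrow> Y i \<in> borel_measurable M"
  shows "pmax Y j \<in> borel_measurable M"
proof -
  have "(\<lambda>w. Max ((\<lambda>i. Y i w) ` {..j})) \<in> borel_measurable M"
    by (rule borel_measurable_Max) (use assms in auto)
  then show ?thesis by (simp add: pmax_def[abs_def])
qed

lemma pmax_square_le_sum: "(pmax Y j w)\<^sup>2 \<le> (\<Sum>k\<le>j. (Y k w)\<^sup>2)"
proof -
  obtain k where "k \<le> j" "pmax Y j w = Y k w" using pmax_eq_member[where Y = Y and j = j and w = w] by blast
  moreover have "(Y k w)\<^sup>2 \<le> (\<Sum>i\<le>j. (Y i w)\<^sup>2)"
    by (rule member_le_sum[of k "{..j}" "\<lambda>i. (Y i w)\<^sup>2"]) (use \<open>k \<le> j\<close> in auto)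
  ultimately show ?thesis by simp
qed

lemma integrable_pmax_square:
  assumes "\<And>i. i \<le> j \<Longrightarrow> Y i \<in> borel_measurable M"
    and "\<And>i. i \<le> j \<Longrightarrow> integrable M (\<lambda>w. (Y i w)\<^sup>2)"
  shows "integrable M (\<lambda>w. (pmax Y j w)\<^sup>2)"
proof (rule Bochner_Integration.integrable_bound)
  show "integrable M (\<lambda>w. \<Sum>k\<le>j. (Y k w)\<^sup>2)" using assms(2) by auto
  show "(\<lambda>w. (pmax Y j w)\<^sup>2) \<in> borel_measurable M"
    using borel_measurable_pmax[OF assms(1)] by measurable
  show "AE w in M. norm ((pmax Y j w)\<^sup>2) \<le> norm (\<Sum>k\<le>j. (Y k w)\<^sup>2)"
    using pmax_square_le_sum[of Y j] by (intro AE_I2) (simp add: sum_nonneg)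
qed

lemma abs_mult_le_sum_squares: "\<bar>(x::real) * y\<bar> \<le> x\<^sup>2 + y\<^sup>2"
  using sum_squares_bound[of x y] sum_squares_bound[of "- x" y]
  by (simp add: abs_le_iff)

lemma integrable_mult_of_square_integrable:
  fixes f g :: "'a \<Rightarrow> real"
  assumes "f \<in> borel_measurable M" "g \<in> borel_measurable M"
    and "integrable M (\<lambda>x. (f x)\<^sup>2)" "integrable M (\<lambda>x. (g x)\<^sup>2)"
  shows "integrable M (\<lambda>x. f x * g x)"
proof (rule Bochner_Integration.integrable_bound)
  show "integrable M (\<lambda>x. (f x)\<^sup>2 + (g x)\<^sup>2)" using assms(3,4) by simp
  show "(\<lambda>x. f x * g x) \<in> borel_measurable M" using assms(1,2) by simp
  show "AE x in M. norm (f x * g x) \<le> norm ((f x)\<^sup>2 + (g x)\<^sup>2)"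
    by (intro AE_I2) (simp add: abs_mult_le_sum_squares)
qed

lemma (in prob_space) expectation_linear_statistic_square:
  fixes Z :: "nat \<Rightarrow> 'a \<Rightarrow> real"
  assumes meas: "\<And>j. j < n \<Longrightarrow> Z j \<in> borel_measurable M"
    and sq: "\<And>j. j < n \<Longrightarrow> integrable M (\<lambda>w. (Z j w)\<^sup>2)"
    and d: "d \<in> carrier_vec n"
  shows "expectation (\<lambda>w. (\<alpha> + \<beta> * (d \<bullet> vec n (\<lambda>j. Z j w)))\<^sup>2)
       = \<alpha>\<^sup>2 + 2 * \<alpha> * \<beta> * (d \<bullet> vec n (\<lambda>j. expectation (Z j)))
         + \<beta>\<^sup>2 * (d \<bullet> (mat n n (\<lambda>(i,j). expectation (\<lambda>w. Z i w * Z j w)) *\<^sub>v d))"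
proof -
  define L where "L = (\<lambda>w. \<Sum>j<n. d $ j * Z j w)"
  define S where "S = (\<lambda>w. \<Sum>i<n. \<Sum>j<n. d $ i * d $ j * (Z i w * Z j w))"
  have int1: "integrable M (Z j)" if "j < n" for j
    using square_integrable_imp_integrable[OF meas sq] that by simp
  have int2: "integrable M (\<lambda>w. Z i w * Z j w)" if "i < n" "j < n" for i j
    using integrable_mult_of_square_integrable[OF meas meas sq sq] that by simp
  have L_integrable: "integrable M L" and S_integrable: "integrable M S"
    using int1 int2 by (auto simp: L_def S_def intro!: Bochner_Integration.integrable_sum integrable_mult_right)
  have "d \<bullet> vec n (\<lambda>j. Z j w) = L w" for w
    using d by (simp add: L_def scalar_prod_def atLeast0LessThan)
  moreover have "(L w)\<^sup>2 = S w" for w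
    by (simp add: L_def S_def power2_eq_square sum_product mult_ac)
  ultimately have "expectation (\<lambda>w. (\<alpha> + \<beta> * (d \<bullet> vec n (\<lambda>j. Z j w)))\<^sup>2)
      = expectation (\<lambda>w. \<alpha>\<^sup>2 + 2 * \<alpha> * \<beta> * L w + \<beta>\<^sup>2 * S w)"
    by (simp add: power2_sum power_mult_distrib algebra_simps)
  also have "\<dots> = \<alpha>\<^sup>2 + 2 * \<alpha> * \<beta> * expectation L + \<beta>\<^sup>2 * expectation S"
    using L_integrable S_integrable by (simp add: prob_space)
  also have "expectation L = d \<bullet> vec n (\<lambda>j. expectation (Z j))"
    using int1 d by (simp add: L_def scalar_prod_def atLeast0LessThan)
  also have "expectation S = (\<Sum>i<n. expectation (\<lambda>w. \<Sum>j<n. d $ i * d $ j * (Z i w * Z j w)))"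
    unfolding S_def using int2 by (intro Bochner_Integration.integral_sum) auto
  also have "\<dots> = (\<Sum>i<n. \<Sum>j<n. d $ i * d $ j * expectation (\<lambda>w. Z i w * Z j w))"
    using int2 by (intro sum.cong refl, subst Bochner_Integration.integral_sum) auto
  also have "\<dots> = d \<bullet> (mat n n (\<lambda>(i,j). expectation (\<lambda>w. Z i w * Z j w)) *\<^sub>v d)"
    using d by (simp add: scalar_prod_def atLeast0LessThan sum_distrib_left mult_ac)
  finally show ?thesis .
qed

lemma E_mat_carrier: "E_mat M n Y \<in> carrier_mat n n"
  by (simp add: E_mat_def)

lemma E_mat_symmetric: "transpose_mat (E_mat M n Y) = E_mat M n Y"
  unfolding E_mat_def by (auto intro!: eq_matI simp: mult.commute)

lemma (in prob_space) MSE_location_scale_pmax: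
  assumes rv: "\<And>i. i < n \<Longrightarrow> Y i \<in> borel_measurable M"
    and sq: "\<And>i. i < n \<Longrightarrow> integrable M (\<lambda>w. (Y i w)\<^sup>2)"
    and d: "d \<in> carrier_vec n"
  shows "MSE M (\<lambda>w. vec n (\<lambda>j. \<theta>\<^sub>1 + \<theta>\<^sub>2 * pmax Y j w)) d t
       = (\<theta>\<^sub>1 * (d \<bullet> ones_vec n) - t)\<^sup>2
         + 2 * (\<theta>\<^sub>1 * (d \<bullet> ones_vec n) - t) * \<theta>\<^sub>2 * (d \<bullet> mu_vec M n Y)
         + \<theta>\<^sub>2\<^sup>2 * (d \<bullet> (E_mat M n Y *\<^sub>v d))"
proof -
  have "vec n (\<lambda>j. \<theta>\<^sub>1 + \<theta>\<^sub>2 * pmax Y j w) = \<theta>\<^sub>1 \<cdot>\<^sub>v ones_vec n + \<theta>\<^sub>2 \<cdot>\<^sub>v vec n (\<lambda>j. pmax Y j w)"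
    for w by (rule eq_vecI) auto
  then have lin: "d \<bullet> vec n (\<lambda>j. \<theta>\<^sub>1 + \<theta>\<^sub>2 * pmax Y j w) - t
      = (\<theta>\<^sub>1 * (d \<bullet> ones_vec n) - t) + \<theta>\<^sub>2 * (d \<bullet> vec n (\<lambda>j. pmax Y j w))" for w
    using d by (simp add: scalar_prod_add_distrib[of _ n])
  have meas: "pmax Y j \<in> borel_measurable M" if "j < n" for j
    using rv that by (intro borel_measurable_pmax) auto
  have sq_pmax: "integrable M (\<lambda>w. (pmax Y j w)\<^sup>2)" if "j < n" for j
    using rv sq that by (intro integrable_pmax_square) auto
  have "MSE M (\<lambda>w. vec n (\<lambda>j. \<theta>\<^sub>1 + \<theta>\<^sub>2 * pmax Y j w)) d t
      = expectation (\<lambda>w. ((\<theta>\<^sub>1 * (d \<bullet> ones_vec n) - t) + \<theta>\<^sub>2 * (d \<bullet> vec n (\<lambda>j. pmax Y j w)))\<^sup>2)"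
    unfolding MSE_def lin ..
  also have "\<dots> = (\<theta>\<^sub>1 * (d \<bullet> ones_vec n) - t)\<^sup>2
         + 2 * (\<theta>\<^sub>1 * (d \<bullet> ones_vec n) - t) * \<theta>\<^sub>2 * (d \<bullet> mu_vec M n Y)
         + \<theta>\<^sub>2\<^sup>2 * (d \<bullet> (E_mat M n Y *\<^sub>v d))"
    unfolding mu_vec_def E_mat_def by (rule expectation_linear_statistic_square[OF meas sq_pmax d])
  finally show ?thesis .
qed

lemma (in prob_space) MSE_pmax_loc:
  assumes "\<And>i. i < n \<Longrightarrow> Y i \<in> borel_measurable M"
    and "\<And>i. i < n \<Longrightarrow> integrable M (\<lambda>w. (Y i w)\<^sup>2)"
    and "d \<in> carrier_vec n" "d \<bullet> ones_vec n = 1"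
  shows "MSE M (\<lambda>w. vec n (\<lambda>j. \<theta>\<^sub>1 + \<theta>\<^sub>2 * pmax Y j w)) d \<theta>\<^sub>1
       = \<theta>\<^sub>2\<^sup>2 * (d \<bullet> (E_mat M n Y *\<^sub>v d))"
  using MSE_location_scale_pmax[OF assms(1-3)] assms(4) by simp

lemma (in prob_space) MSE_pmax_scale:
  assumes "\<And>i. i < n \<Longrightarrow> Y i \<in> borel_measurable M"
    and "\<And>i. i < n \<Longrightarrow> integrable M (\<lambda>w. (Y i w)\<^sup>2)"
    and "d \<in> carrier_vec n" "d \<bullet> ones_vec n = 0"
  shows "MSE M (\<lambda>w. vec n (\<lambda>j. \<theta>\<^sub>1 + \<theta>\<^sub>2 * pmax Y j w)) d \<theta>\<^sub>2
       = \<theta>\<^sub>2\<^sup>2 + \<theta>\<^sub>2\<^sup>2 * (d \<bullet> (E_mat M n Y *\<^sub>v d) - 2 * (d \<bullet> mu_vec M n Y))"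
  using MSE_location_scale_pmax[OF assms(1-3)] assms(4) by (simp add: algebra_simps power2_eq_square)

lemma AE_le_of_integral_max_le:
  fixes f g :: "'a \<Rightarrow> real"
  assumes f: "integrable M f" and g: "integrable M g"
    and le: "integral\<^sup>L M (\<lambda>x. max (f x) (g x)) \<le> integral\<^sup>L M f"
  shows "AE x in M. g x \<le> f x"
proof -
  define h where "h = (\<lambda>x. max (f x) (g x) - f x)"
  have h: "integrable M h" and h_nonneg: "AE x in M. 0 \<le> h x"
    using f g by (auto simp: h_def)
  have "integral\<^sup>L M h \<le> 0" using le f g by (simp add: h_def)
  then have "integral\<^sup>L M h = 0" using integral_nonneg_AE[OF h_nonneg] by simp
  then have "AE x in M. h x = 0" using integral_nonneg_eq_0_iff_AE[OF h h_nonneg] by simp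
  then show ?thesis by eventually_elim (simp add: h_def)
qed

lemma (in prob_space) prob_le_less_of_indep_vars:
  fixes Y :: "'i \<Rightarrow> 'a \<Rightarrow> real"
  assumes indep: "indep_vars (\<lambda>_. borel) Y I" and "i \<in> I" "j \<in> I" "i \<noteq> j"
    and rv: "Y j \<in> borel_measurable M"
  shows "prob {w \<in> space M. Y i w \<le> x \<and> x < Y j w}
       = prob {w \<in> space M. Y i w \<le> x} * (1 - prob {w \<in> space M. Y j w \<le> x})"
proof -
  define A where "A k = (if k = i then {..x} else {x<..})" for k
  have "prob (\<Inter>k\<in>{i, j}. Y k -` A k \<inter> space M) = (\<Prod>k\<in>{i, j}. prob (Y k -` A k \<inter> space M))"
    by (rule indep_varsD[OF indep]) (use assms in \<open>auto simp: A_def\<close>)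
  moreover have "(\<Inter>k\<in>{i, j}. Y k -` A k \<inter> space M) = {w \<in> space M. Y i w \<le> x \<and> x < Y j w}"
    using \<open>i \<noteq> j\<close> by (auto simp: A_def)
  moreover have "Y j -` A j \<inter> space M = space M - {w \<in> space M. Y j w \<le> x}"
    using \<open>i \<noteq> j\<close> by (auto simp: A_def)
  moreover have "prob (space M - {w \<in> space M. Y j w \<le> x}) = 1 - prob {w \<in> space M. Y j w \<le> x}"
    using rv by (intro prob_compl) measurable
  moreover have "Y i -` A i \<inter> space M = {w \<in> space M. Y i w \<le> x}"
    by (auto simp: A_def)
  ultimately show ?thesis using \<open>i \<noteq> j\<close> by simp
qed

text \<open>If the mean of \<open>max(Y\<^sub>0, Y\<^sub>1)\<close> were that of \<open>Y\<^sub>0\<close>, the event \<open>Y\<^sub>0 \<le> x < Y\<^sub>1\<close> would be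
  null, but by independence it has probability \<open>F x (1 - F x) > 0\<close>.\<close>
lemma (in prob_space) expectation_pmax_0_less_1:
  assumes "n \<ge> 2"
    and rv: "\<And>i. i < n \<Longrightarrow> Y i \<in> borel_measurable M"
    and indep: "indep_vars (\<lambda>_. borel) Y {..<n}"
    and cdf: "\<And>i x. i < n \<Longrightarrow> prob {w \<in> space M. Y i w \<le> x} = F x"
    and nondeg: "0 < F x" "F x < 1"
    and int: "\<And>i. i < n \<Longrightarrow> integrable M (Y i)"
  shows "expectation (pmax Y 0) < expectation (pmax Y 1)"
proof (rule ccontr)
  have pmax0: "pmax Y 0 = Y 0" by (rule ext) (simp add: pmax_def)
  have "{..1::nat} = {0, 1}" by auto
  then have pmax1: "pmax Y 1 = (\<lambda>w. max (Y 0 w) (Y 1 w))"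
    by (intro ext) (simp add: pmax_def max.commute)
  assume "\<not> ?thesis"
  then have "expectation (\<lambda>w. max (Y 0 w) (Y 1 w)) \<le> expectation (Y 0)"
    unfolding pmax0 pmax1 by simp
  then have "AE w in M. Y 1 w \<le> Y 0 w"
    using int \<open>n \<ge> 2\<close> by (intro AE_le_of_integral_max_le) auto
  then have "AE w in M. w \<notin> {w \<in> space M. Y 0 w \<le> x \<and> x < Y 1 w}"
    by eventually_elim auto
  moreover have "{w \<in> space M. Y 0 w \<le> x \<and> x < Y 1 w} \<in> events"
    using rv[of 0] rv[of 1] \<open>n \<ge> 2\<close> by simp
  ultimately have "prob {w \<in> space M. Y 0 w \<le> x \<and> x < Y 1 w} = 0"
    by (simp add: AE_iff_null_sets measure_eq_0_null_sets)
  moreover have "prob {w \<in> space M. Y 0 w \<le> x \<and> x < Y 1 w} = F x * (1 - F x)"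
    using prob_le_less_of_indep_vars[OF indep, of 0 1] rv cdf \<open>n \<ge> 2\<close> by simp
  ultimately show False using nondeg by simp
qed

lemma (in prob_space) mu_vec_neq_smult_ones:
  assumes "n \<ge> 2"
    and rv: "\<And>i. i < n \<Longrightarrow> Y i \<in> borel_measurable M"
    and indep: "indep_vars (\<lambda>_. borel) Y {..<n}"
    and cdf: "\<And>i x. i < n \<Longrightarrow> prob {w \<in> space M. Y i w \<le> x} = F x"
    and nondeg: "\<exists>x. 0 < F x \<and> F x < 1"
    and sq: "\<And>i. i < n \<Longrightarrow> integrable M (\<lambda>w. (Y i w)\<^sup>2)"
  shows "mu_vec M n Y \<noteq> k \<cdot>\<^sub>v ones_vec n"
proof -
  have int: "integrable M (Y i)" if "i < n" for i
    using square_integrable_imp_integrable[OF rv sq] that by simp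
  obtain x where "0 < F x" "F x < 1" using nondeg by blast
  from expectation_pmax_0_less_1[OF \<open>n \<ge> 2\<close> rv indep cdf this int]
  have "mu_vec M n Y $ 0 < mu_vec M n Y $ 1" using \<open>n \<ge> 2\<close> by (simp add: mu_vec_def)
  then show ?thesis using \<open>n \<ge> 2\<close> by auto
qed

theorem proposition2p2:
  fixes M :: "'a measure" and Y :: "nat \<Rightarrow> 'a \<Rightarrow> real" and F :: "real \<Rightarrow> real"
    and n :: nat and theta1 theta2 :: real
  assumes "prob_space M"
    and "n \<ge> 2"
    and rv: "\<And>i. i < n \<Longrightarrow> Y i \<in> borel_measurable M"
    and indep: "prob_space.indep_vars M (\<lambda>_. borel) Y {..<n}"
    and cdf: "\<And>i x. i < n \<Longrightarrow> measure M {w \<in> space M. Y i w \<le> x} = F x"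
    and nondeg: "\<exists>x. 0 < F x \<and> F x < 1"
    and finvar: "\<And>i. i < n \<Longrightarrow> integrable M (\<lambda>w. (Y i w)\<^sup>2)"
    and posdef: "pos_def_mat n (E_mat M n Y)"
    and "theta2 > 0"
  defines "Xs \<equiv> (\<lambda>w. vec n (\<lambda>j. theta1 + theta2 * pmax Y j w))"
    and "mu \<equiv> mu_vec M n Y"
    and "Ei \<equiv> inv_mat (E_mat M n Y)"
    and "ones \<equiv> ones_vec n"
  defines "G \<equiv> Ei * mat n n (\<lambda>(i,j). ones $ i * mu $ j - mu $ i * ones $ j) * Ei"
    and "Q \<equiv> ones \<bullet> (Ei *\<^sub>v ones)"
  defines "D \<equiv> Q * (mu \<bullet> (Ei *\<^sub>v mu)) - (ones \<bullet> (Ei *\<^sub>v mu))\<^sup>2"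
    and "c1 \<equiv> (1 / Q) \<cdot>\<^sub>v (transpose_mat Ei *\<^sub>v ones)"
    and "c2 \<equiv> (1 / Q) \<cdot>\<^sub>v (transpose_mat G *\<^sub>v ones)"
  shows "is_BLIE M n Xs (invariant_loc n) theta1 c1
       \<and> is_BLIE M n Xs (invariant_scale n) theta2 c2
       \<and> MSE M Xs c1 theta1 = theta2\<^sup>2 / Q
       \<and> MSE M Xs c2 theta2 = (1 - D / Q) * theta2\<^sup>2
       \<and> D > 0"
proof -
  interpret prob_space M by fact
  interpret gls: gls_weights n "E_mat M n Y" Ei mu
    using posdef pos_def_mat_inv_mat[OF E_mat_carrier posdef] \<open>n \<ge> 2\<close>
    by unfold_locales (auto simp: E_mat_carrier E_mat_symmetric Ei_def mu_def mu_vec_def)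
  have Q: "Q = gls.Q" and D: "D = gls.D" and c1: "c1 = gls.c_loc" and c2: "c2 = gls.c_scale"
    by (simp_all add: Q_def D_def c1_def c2_def G_def ones_def gls.Q_def gls.D_def gls.P_def
        gls.c_loc_def gls.c_scale_def gls.G_def)
  have "D > 0" unfolding D
    using mu_vec_neq_smult_ones[OF \<open>n \<ge> 2\<close> rv indep cdf nondeg finvar]
    by (intro gls.D_pos) (simp add: mu_def)
  have mse_loc: "MSE M Xs d theta1 = theta2\<^sup>2 * (d \<bullet> (E_mat M n Y *\<^sub>v d))"
    if "d \<in> carrier_vec n" "d \<bullet> ones_vec n = 1" for d
    unfolding Xs_def by (rule MSE_pmax_loc[OF rv finvar that])
  have mse_scale: "MSE M Xs d theta2
      = theta2\<^sup>2 + theta2\<^sup>2 * (d \<bullet> (E_mat M n Y *\<^sub>v d) - 2 * (d \<bullet> mu))"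
    if "d \<in> carrier_vec n" "d \<bullet> ones_vec n = 0" for d
    unfolding Xs_def mu_def by (rule MSE_pmax_scale[OF rv finvar that])
  have "is_BLIE M n Xs (invariant_loc n) theta1 c1" unfolding c1
    using gls.E_c_loc gls.c_loc_ones invariant_loc_iff mse_loc \<open>theta2 > 0\<close>
    by (intro is_BLIE_quadratic[OF posdef E_mat_carrier E_mat_symmetric zero_carrier_vec
          gls.c_loc_carrier, where k = "1 / gls.Q" and \<alpha> = 0 and \<beta> = "theta2\<^sup>2"]) simp_all
  moreover have "is_BLIE M n Xs (invariant_scale n) theta2 c2" unfolding c2
    using gls.E_c_scale gls.c_scale_ones invariant_scale_iff mse_scale \<open>theta2 > 0\<close>
    by (intro is_BLIE_quadratic[OF posdef E_mat_carrier E_mat_symmetric gls.mu_carrier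
          gls.c_scale_carrier, where \<alpha> = "theta2\<^sup>2" and \<beta> = "theta2\<^sup>2"]) simp_all
  moreover have "MSE M Xs c1 theta1 = theta2\<^sup>2 / Q"
    using mse_loc[OF gls.c_loc_carrier gls.c_loc_ones] gls.quad_c_loc by (simp add: c1 Q)
  moreover have "MSE M Xs c2 theta2 = (1 - D / Q) * theta2\<^sup>2"
    using mse_scale[OF gls.c_scale_carrier gls.c_scale_ones] gls.c_scale_mu gls.quad_c_scale
    by (simp add: c2 Q D algebra_simps)
  ultimately show ?thesis using \<open>D > 0\<close> by blast
qed

end
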